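(* Fix an agent index $i$ with prediction horizon $N_i\ge n_i$, and suppose the input applied at time $t$ is $u_i(t) = \kappa_i(x_i(t),w_i(t))$, so that $x_i(t+1) = A_i x_i(t) + B_i u_i(t)$. If $\mathbb{QP}_i(x_i(t),w_i(t))$ is feasible at time $t$, then $\mathbb{QP}_i(x_i(t+1),w_i(t+1))$ is feasible at time $t+1$ for every $w_i(t+1)\in\mathbb{R}^p$, in particular even when $w_i(t+1)\neq S w_i(t)$.
   Context: Agent $i$: $x_i(t+1) = A_i x_i(t) + B_i u_i(t)$, $y_i(t) = C_i x_i(t)$, with $x_i(t)\in\mathbb{R}^{n_i}$, $u_i(t)\in\mathbb{R}^{m_i}$, $y_i(t)\in\mathbb{R}^q$, subject to $[x_i(t)^\top\ u_i(t)^\top]^\top \in \mathbb{Z}_i$. Standing assumptions: $(A_i,B_i)$ controllable; $\mathbb{Z}_i$ a polytope containing the origin in its interior; $K_i$ fixed with $A_i^{c} := A_i + B_i K_i$ Schur. $S\in\mathbb{R}^{p\times p}$, $Q_e\in\mathbb{R}^{q\times p}$ with $S^\rho = I$ for some positive integer $\rho$; for every eigenvalue $\lambda$ of $S$, $\begin{bmatrix} A_i-\lambda I & B_i\\ C_i & \mathbf{0}\end{bmatrix}$ has full row rank. $\Pi_i,\Gamma_i$ satisfy $A_i\Pi_i + B_i\Gamma_i = \Pi_i S$, $C_i\Pi_i = Q_e$; $L_i := \Gamma_i - K_i\Pi_i$. $w_i(t)\in\mathbb{R}^p$ is the reference of agent $i$. Fix $\epsilon_i\in(0,1)$. $\mathcal{O}_\infty^i$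 is the set of $(x,w)$ such that the sequence $x(0)=x$, $w(0)=w$, $x(k+1) = A_i^c x(k) + B_i L_i w(k)$, $w(k+1) = S w(k)$ satisfies $[x(k)^\top\ (K_i x(k) + L_i w(k))^\top]^\top \in (1-\epsilon_i)\mathbb{Z}_i$ for all $k\ge 0$. Weights: $T_i = \sum_{k=1}^{\rho}(S^k)^\top T_i^0 S^k$, $T_i^0$ symmetric positive definite; $Q_i,R_i$ symmetric positive definite; $P_i$ solves $(A_i^c)^\top P_i A_i^c - P_i + Q_i = \mathbf{0}$; $\|z\|_T^2 = z^\top Tz$. MPC problem $\mathbb{QP}_i(x_i(t),w_i(t))$: decision variables $\bar w_i(0|t)\in\mathbb{R}^p$, $v_i(k|t)\in\mathbb{R}^{m_i}$ ($k=0,\dots,N_i-1$); $x_i(0|t) = x_i(t)$, $x_i(k+1|t) = A_i^c x_i(k|t) + B_i L_i \bar w_i(k|t) + B_i v_i(k|t)$, $\bar w_i(k+1|t) = S\bar w_i(k|t)$; constraints $[x_i(k|t)^\top\ (K_i x_i(k|t) + L_i\bar w_i(k|t) + v_i(k|t))^\top]^\top\in\mathbb{Z}_i$ for $k=0,\dots,N_i-1$, and $[x_i(N_i|t)^\top\ \bar w_i(N_i|t)^\top]^\top\in\mathcal{O}_\infty^i$; minimize $\|\bar w_i(0|t)-w_i(t)\|_{T_i}^2 + \sum_{k=0}^{N_i-1}\|x_i(k|t)-\Pi_i\bar w_i(k|t)\|_{Q_i}^2 + \sum_{k=0}^{N_i-1}\|v_i(k|t)\|_{R_i}^2 + \|x_i(N_i|t)-\Pi_i\bar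 w_i(N_i|t)\|_{P_i}^2$. With optimizer $\bar w_i^*(0|t), v_i^*(0|t)$, $\kappa_i(x_i(t),w_i(t)) = K_i x_i(t) + L_i\bar w_i^*(0|t) + v_i^*(0|t)$. *)

theory Defs
  imports "HOL-Analysis.Analysis"
begin

(* Matrix power A^k (the Cartesian matrix type has componentwise ring ops, so ^ is not used) *)
fun mpow :: "real^'n^'n \<Rightarrow> nat \<Rightarrow> real^'n^'n" where
  "mpow A 0 = mat 1"
| "mpow A (Suc k) = A ** mpow A k"

definition cmat :: "real^'c^'r \<Rightarrow> complex^'c^'r" where
  "cmat A = (\<chi> i j. complex_of_real (A $ i $ j))"

(* (A,B) controllable: the controllability matrix [B AB ... A^(n-1)B] has full rank n,
   i.e. its columns span R^n *)
definition controllable :: "real^'n^'n \<Rightarrow> real^'m^'n \<Rightarrow> bool" where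
  "controllable A B \<longleftrightarrow>
     span (\<Union>k\<in>{..<CARD('n)}. range (\<lambda>u. mpow A k *v (B *v u))) = UNIV"

definition is_eigenvalue :: "real^'n^'n \<Rightarrow> complex \<Rightarrow> bool" where
  "is_eigenvalue A lam \<longleftrightarrow> (\<exists>v::complex^'n. v \<noteq> 0 \<and> cmat A *v v = lam *s v)"

definition schur :: "real^'n^'n \<Rightarrow> bool" where
  "schur A \<longleftrightarrow> (\<forall>lam. is_eigenvalue A lam \<longrightarrow> cmod lam < 1)"

(* The block matrix [[A - lam I, B],[C, 0]] has full row rank: its rows (the rows of
   [A - lam I, B] indexed by 'n and the rows of [C, 0] indexed by 'q) are linearly
   independent over the complex numbers. A row combination with coefficients (y,z) is
   (y v* (A - lam I) + z v* C, y v* B). *)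
definition full_row_rank_block :: "real^'n^'n \<Rightarrow> real^'m^'n \<Rightarrow> real^'n^'q \<Rightarrow> complex \<Rightarrow> bool" where
  "full_row_rank_block A B C lam \<longleftrightarrow>
     (\<forall>(y::complex^'n) (z::complex^'q).
        y v* (cmat A - mat lam) + z v* cmat C = 0 \<and> y v* cmat B = 0
        \<longrightarrow> y = 0 \<and> z = 0)"

definition sym_pd :: "real^'n^'n \<Rightarrow> bool" where
  "sym_pd M \<longleftrightarrow> transpose M = M \<and> (\<forall>z. z \<noteq> 0 \<longrightarrow> z \<bullet> (M *v z) > 0)"

definition wnorm2 :: "real^'n^'n \<Rightarrow> real^'n \<Rightarrow> real" where
  "wnorm2 T z = z \<bullet> (T *v z)"

fun cl_traj :: "real^'n^'n \<Rightarrow> real^'m^'n \<Rightarrow> real^'p^'m \<Rightarrow> real^'p^'p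
                 \<Rightarrow> real^'n \<Rightarrow> real^'p \<Rightarrow> nat \<Rightarrow> (real^'n) \<times> (real^'p)" where
  "cl_traj Ac B L S x w 0 = (x, w)"
| "cl_traj Ac B L S x w (Suc k) =
     (let (xk, wk) = cl_traj Ac B L S x w k in (Ac *v xk + B *v (L *v wk), S *v wk))"

definition O_inf :: "real^'n^'n \<Rightarrow> real^'m^'n \<Rightarrow> real^'n^'m \<Rightarrow> real^'p^'m \<Rightarrow> real^'p^'p
                     \<Rightarrow> ((real^'n) \<times> (real^'m)) set \<Rightarrow> real \<Rightarrow> ((real^'n) \<times> (real^'p)) set" where
  "O_inf A B K L S Z \<epsilon> =
     {(x, w). \<forall>k. (let (xk, wk) = cl_traj (A + B ** K) B L S x w k
                   in (xk, K *v xk + L *v wk) \<in> (\<lambda>z. (1 - \<epsilon>) *\<^sub>R z) ` Z)}"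

definition wpred :: "real^'p^'p \<Rightarrow> real^'p \<Rightarrow> nat \<Rightarrow> real^'p" where
  "wpred S wb k = mpow S k *v wb"

fun xpred :: "real^'n^'n \<Rightarrow> real^'m^'n \<Rightarrow> real^'n^'m \<Rightarrow> real^'p^'m \<Rightarrow> real^'p^'p
              \<Rightarrow> real^'n \<Rightarrow> real^'p \<Rightarrow> (nat \<Rightarrow> real^'m) \<Rightarrow> nat \<Rightarrow> real^'n" where
  "xpred A B K L S x wb v 0 = x"
| "xpred A B K L S x wb v (Suc k) =
     (A + B ** K) *v xpred A B K L S x wb v k + B *v (L *v wpred S wb k) + B *v v k"

(* constraints of QP_i(x,w) for the decision variables \<bar>w(0|t) = wb, v(k|t) = v k (k < N) *)
definition qp_constr :: "real^'n^'n \<Rightarrow> real^'m^'n \<Rightarrow> real^'n^'m \<Rightarrow> real^'p^'m \<Rightarrow> real^'p^'p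
                \<Rightarrow> ((real^'n) \<times> (real^'m)) set \<Rightarrow> real \<Rightarrow> nat
                \<Rightarrow> real^'n \<Rightarrow> real^'p \<Rightarrow> (nat \<Rightarrow> real^'m) \<Rightarrow> bool" where
  "qp_constr A B K L S Z \<epsilon> N x wb v \<longleftrightarrow>
     (\<forall>k<N. (xpred A B K L S x wb v k,
             K *v xpred A B K L S x wb v k + L *v wpred S wb k + v k) \<in> Z)
     \<and> (xpred A B K L S x wb v N, wpred S wb N) \<in> O_inf A B K L S Z \<epsilon>"

(* QP_i(x,w) is feasible (the constraints do not involve w; only the cost does) *)
definition qp_feasible :: "real^'n^'n \<Rightarrow> real^'m^'n \<Rightarrow> real^'n^'m \<Rightarrow> real^'p^'m \<Rightarrow> real^'p^'p
                \<Rightarrow> ((real^'n) \<times> (real^'m)) set \<Rightarrow> real \<Rightarrow> nat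
                \<Rightarrow> real^'n \<Rightarrow> real^'p \<Rightarrow> bool" where
  "qp_feasible A B K L S Z \<epsilon> N x w \<longleftrightarrow> (\<exists>wb v. qp_constr A B K L S Z \<epsilon> N x wb v)"

definition qp_cost :: "real^'n^'n \<Rightarrow> real^'m^'n \<Rightarrow> real^'n^'m \<Rightarrow> real^'p^'m \<Rightarrow> real^'p^'p
                \<Rightarrow> real^'p^'n \<Rightarrow> real^'p^'p \<Rightarrow> real^'n^'n \<Rightarrow> real^'m^'m \<Rightarrow> real^'n^'n \<Rightarrow> nat
                \<Rightarrow> real^'n \<Rightarrow> real^'p \<Rightarrow> real^'p \<Rightarrow> (nat \<Rightarrow> real^'m) \<Rightarrow> real" where
  "qp_cost A B K L S Pim T Q R P N x w wb v =
     wnorm2 T (wb - w)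
     + (\<Sum>k<N. wnorm2 Q (xpred A B K L S x wb v k - Pim *v wpred S wb k))
     + (\<Sum>k<N. wnorm2 R (v k))
     + wnorm2 P (xpred A B K L S x wb v N - Pim *v wpred S wb N)"

definition qp_optimizer :: "real^'n^'n \<Rightarrow> real^'m^'n \<Rightarrow> real^'n^'m \<Rightarrow> real^'p^'m \<Rightarrow> real^'p^'p
                \<Rightarrow> ((real^'n) \<times> (real^'m)) set \<Rightarrow> real \<Rightarrow> real^'p^'n \<Rightarrow> real^'p^'p \<Rightarrow> real^'n^'n
                \<Rightarrow> real^'m^'m \<Rightarrow> real^'n^'n \<Rightarrow> nat
                \<Rightarrow> real^'n \<Rightarrow> real^'p \<Rightarrow> real^'p \<Rightarrow> (nat \<Rightarrow> real^'m) \<Rightarrow> bool" where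
  "qp_optimizer A B K L S Z \<epsilon> Pim T Q R P N x w wb v \<longleftrightarrow>
     qp_constr A B K L S Z \<epsilon> N x wb v \<and>
     (\<forall>wb' v'. qp_constr A B K L S Z \<epsilon> N x wb' v' \<longrightarrow>
        qp_cost A B K L S Pim T Q R P N x w wb v \<le> qp_cost A B K L S Pim T Q R P N x w wb' v')"

end

theory Submission
  imports Defs
begin

(* Recursive feasibility by the usual shifted candidate: keep the artificial reference
   on its exosystem trajectory (S wb instead of wb), drop the first input and append the
   zero correction v = 0 at the end.  The appended step is admissible because the old
   terminal pair lies in O_inf, whose tightened constraint set (1 - eps) Z lies in Z,
   and the new terminal pair is the closed-loop successor of the old one, under which
   O_inf is invariant.  The new measurement w' never enters the constraints. *)

lemma mpow_Suc_right: "mpow A (Suc k) = mpow A k ** A"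
proof (induction k)
  case 0
  then show ?case by (simp add: matrix_mul_lid matrix_mul_rid)
next
  case (Suc k)
  have "mpow A (Suc (Suc k)) = A ** (mpow A k ** A)" using Suc by simp
  also have "\<dots> = mpow A (Suc k) ** A" by (simp add: matrix_mul_assoc)
  finally show ?case .
qed

lemma wpred_0 [simp]: "wpred S wb 0 = wb"
  by (simp add: wpred_def)

lemma wpred_Suc_shift: "wpred S (S *v wb) k = wpred S wb (Suc k)"
  unfolding wpred_def by (simp only: mpow_Suc_right matrix_vector_mul_assoc)

lemma wpred_Suc: "wpred S wb (Suc k) = S *v wpred S wb k"
  by (simp add: wpred_def matrix_vector_mul_assoc)

lemma cl_traj_Suc_shift:
  "cl_traj Ac B L S x w (Suc k) = cl_traj Ac B L S (Ac *v x + B *v (L *v w)) (S *v w) k"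
  by (induction k) (auto simp: split_beta)

lemma O_inf_closed_loop_step:
  assumes "(x, w) \<in> O_inf A B K L S Z \<epsilon>"
  shows "((A + B ** K) *v x + B *v (L *v w), S *v w) \<in> O_inf A B K L S Z \<epsilon>"
  using assms unfolding O_inf_def
  by (auto simp del: cl_traj.simps simp: cl_traj_Suc_shift[symmetric])

lemma convex_scaleR_mem:
  assumes "convex Z" "0 \<in> Z" "z \<in> Z" "0 \<le> a" "a \<le> 1"
  shows "a *\<^sub>R z \<in> Z"
  using convexD[OF assms(1) assms(3) assms(2), of a "1 - a"] assms(4,5) by simp

lemma O_inf_imp_constraint:
  assumes "(x, w) \<in> O_inf A B K L S Z \<epsilon>"
    and "convex Z" "0 \<in> Z" "0 \<le> \<epsilon>" "\<epsilon> \<le> 1"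
  shows "(x, K *v x + L *v w) \<in> Z"
proof -
  have "(x, K *v x + L *v w) \<in> (\<lambda>z. (1 - \<epsilon>) *\<^sub>R z) ` Z"
    using assms(1) unfolding O_inf_def
    by (metis (no_types, lifting) case_prod_conv cl_traj.simps(1) mem_Collect_eq)
  then show ?thesis
    using convex_scaleR_mem[OF assms(2,3)] assms(4,5) by auto
qed

lemma xpred_1:
  "xpred A B K L S x wb v 1 = A *v x + B *v (K *v x + L *v wb + v 0)"
  by (simp add: matrix_vector_mult_add_rdistrib matrix_vector_right_distrib
      matrix_vector_mul_assoc)

lemma xpred_shift:
  assumes "\<And>j. j < k \<Longrightarrow> v' j = v (Suc j)"
  shows "xpred A B K L S (xpred A B K L S x wb v 1) (S *v wb) v' k
           = xpred A B K L S x wb v (Suc k)"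
  using assms
proof (induction k)
  case 0
  then show ?case by simp
next
  case (Suc k)
  then have IH: "xpred A B K L S (xpred A B K L S x wb v 1) (S *v wb) v' k
                   = xpred A B K L S x wb v (Suc k)"
    by simp
  have "v' k = v (Suc k)" using Suc.prems by simp
  then show ?case
    by (simp only: xpred.simps(2)[of _ _ _ _ _ _ _ _ k] IH wpred_Suc_shift) simp
qed

lemma qp_constr_shifted_candidate:
  assumes constr: "qp_constr A B K L S Z \<epsilon> N x wb v"
    and N_pos: "0 < N"
    and Z: "convex Z" "0 \<in> Z" and eps: "0 \<le> \<epsilon>" "\<epsilon> \<le> 1"
  shows "qp_constr A B K L S Z \<epsilon> N (xpred A B K L S x wb v 1) (S *v wb)
           (\<lambda>k. if Suc k < N then v (Suc k) else 0)"
    (is "qp_constr _ _ _ _ _ _ _ _ ?x1 _ ?v'")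
proof -
  let ?xp = "xpred A B K L S x wb v"
  let ?xp' = "xpred A B K L S ?x1 (S *v wb) ?v'"
  have xp'_shift: "?xp' k = ?xp (Suc k)" if "k < N" for k
    by (rule xpred_shift) (use that in auto)
  have in_Z: "(?xp k, K *v ?xp k + L *v wpred S wb k + v k) \<in> Z" if "k < N" for k
    using constr that unfolding qp_constr_def by blast
  have terminal: "(?xp N, wpred S wb N) \<in> O_inf A B K L S Z \<epsilon>"
    using constr unfolding qp_constr_def by blast
  obtain M where M: "N = Suc M" using N_pos gr0_conv_Suc by blast
  have stage_in_Z: "(?xp' k, K *v ?xp' k + L *v wpred S (S *v wb) k + ?v' k) \<in> Z"
    if "k < N" for k
  proof (cases "Suc k < N")
    case True
    then show ?thesis using xp'_shift[OF that] in_Z[OF True] by (simp add: wpred_Suc_shift)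
  next
    case False
    then have "Suc k = N" using that by simp
    then show ?thesis
      using xp'_shift[OF that] O_inf_imp_constraint[OF terminal Z eps]
      by (simp add: wpred_Suc_shift)
  qed
  have "?xp' N = (A + B ** K) *v ?xp N + B *v (L *v wpred S wb N)"
    using xp'_shift[of M] by (simp add: M wpred_Suc_shift)
  moreover have "wpred S (S *v wb) N = S *v wpred S wb N"
    by (simp add: wpred_Suc_shift wpred_Suc)
  ultimately have "(?xp' N, wpred S (S *v wb) N) \<in> O_inf A B K L S Z \<epsilon>"
    using O_inf_closed_loop_step[OF terminal] by simp
  with stage_in_Z show ?thesis unfolding qp_constr_def by blast
qed

theorem lemma5:
  fixes A :: "real^'n^'n" and B :: "real^'m^'n" and C :: "real^'n^'q"
    and Z :: "((real^'n) \<times> (real^'m)) set" and K :: "real^'n^'m"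
    and S :: "real^'p^'p" and Qe :: "real^'p^'q" and \<rho> :: nat
    and Pim :: "real^'p^'n" and Gamma :: "real^'p^'m" and L :: "real^'p^'m"
    and \<epsilon> :: real and T0 T :: "real^'p^'p" and Q P :: "real^'n^'n" and R :: "real^'m^'m"
    and N :: nat
    and x :: "real^'n" and w w' :: "real^'p"
    and wb :: "real^'p" and v :: "nat \<Rightarrow> real^'m"
  assumes ctrb: "controllable A B"
    and Z_poly: "polytope Z" and Z_int: "(0, 0) \<in> interior Z"
    and K_schur: "schur (A + B ** K)"
    and S_per: "0 < \<rho>" "mpow S \<rho> = mat 1"
    and rank_cond: "\<And>lam. is_eigenvalue S lam \<Longrightarrow> full_row_rank_block A B C lam"
    and reg1: "A ** Pim + B ** Gamma = Pim ** S" and reg2: "C ** Pim = Qe"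
    and L_def: "L = Gamma - K ** Pim"
    and eps: "0 < \<epsilon>" "\<epsilon> < 1"
    and T0_pd: "sym_pd T0"
    and T_def: "T = (\<Sum>k\<in>{1..\<rho>}. transpose (mpow S k) ** T0 ** mpow S k)"
    and Q_pd: "sym_pd Q" and R_pd: "sym_pd R"
    and P_lyap: "transpose (A + B ** K) ** P ** (A + B ** K) - P + Q = 0"
    and horizon: "N \<ge> CARD('n)"
    and feas: "qp_feasible A B K L S Z \<epsilon> N x w"
    and opt: "qp_optimizer A B K L S Z \<epsilon> Pim T Q R P N x w wb v"
  shows "qp_feasible A B K L S Z \<epsilon> N (A *v x + B *v (K *v x + L *v wb + v 0)) w'"
proof -
  have constr: "qp_constr A B K L S Z \<epsilon> N x wb v"
    using opt unfolding qp_optimizer_def by blast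
  have "0 < CARD('n)" by simp
  then have "0 < N" using horizon by linarith
  moreover have "convex Z" using Z_poly by (rule polytope_imp_convex)
  moreover have "0 \<in> Z" using Z_int interior_subset by (auto simp: zero_prod_def)
  ultimately show ?thesis
    using qp_constr_shifted_candidate[OF constr] eps
    unfolding qp_feasible_def xpred_1 by fastforce
qed

end
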